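(* Let $\mathcal A$ be a set of graphs, let $\mathcal C$ be a class of connected graphs each of which is bridge-addable in $\mathcal A$, and let $R_n\in_u\mathcal A$. Then: (a) $\mathbb E[\operatorname{frag}(R_n,\mathcal C)]<2$ for each $n$ with $\mathcal A_n\ne\emptyset$; (b) for $a\in\mathbb N$, letting $\mathcal B$ be the set of graphs $G\in\mathcal A$ having a component $H\in\mathcal C$ with $a\le v(H)\le v(G)-a$, we have $\mathbb P(R_n\in\mathcal B)<2/a$ for all $n\ge 2a$ (with $\mathcal A_n\ne\emptyset$).
   Context: $\mathcal A_n$: graphs in $\mathcal A$ on vertex set $[n]$; $R_n\in_u\mathcal A$: uniform on $\mathcal A_n$. A connected graph $H$ is bridge-addable in $\mathcal A$ if whenever $G\in\mathcal A$ has a component isomorphic to $H$ and $e$ is a non-edge between that component and the rest of $G$, $G+e\in\mathcal A$. $\operatorname{Frag}(G)$ is obtained from $G$ by deleting a largest component (ties broken arbitrarily); $\operatorname{frag}(G,\mathcal C)$ is the number of vertices in the components of $\operatorname{Frag}(G)$ that are in $\mathcal C$. *)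

theory Defs
  imports Complex_Main
begin

text \<open>A (simple, labelled) graph: a vertex set of naturals and a set of 2-element edges.\<close>
type_synonym graph = "nat set \<times> nat set set"

definition verts :: "graph \<Rightarrow> nat set" where "verts G = fst G"
definition edges :: "graph \<Rightarrow> nat set set" where "edges G = snd G"

definition wf_graph :: "graph \<Rightarrow> bool" where
  "wf_graph G \<longleftrightarrow> finite (verts G) \<and>
     (\<forall>e\<in>edges G. \<exists>u v. u \<noteq> v \<and> e = {u, v} \<and> u \<in> verts G \<and> v \<in> verts G)"

definition reach :: "graph \<Rightarrow> nat \<Rightarrow> nat \<Rightarrow> bool" where
  "reach G u v \<longleftrightarrow> (u, v) \<in> {(x, y). {x, y} \<in> edges G}\<^sup>*"

definition comps :: "graph \<Rightarrow> nat set set" where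
  "comps G = (\<lambda>u. {v \<in> verts G. reach G u v}) ` verts G"

definition induced :: "graph \<Rightarrow> nat set \<Rightarrow> graph" where
  "induced G S = (S, {e \<in> edges G. e \<subseteq> S})"

definition connected_graph :: "graph \<Rightarrow> bool" where
  "connected_graph G \<longleftrightarrow> verts G \<noteq> {} \<and> (\<forall>u\<in>verts G. \<forall>v\<in>verts G. reach G u v)"

definition graph_iso :: "graph \<Rightarrow> graph \<Rightarrow> bool" where
  "graph_iso G H \<longleftrightarrow> (\<exists>f. bij_betw f (verts G) (verts H) \<and>
     (\<forall>u\<in>verts G. \<forall>v\<in>verts G. {u, v} \<in> edges G \<longleftrightarrow> {f u, f v} \<in> edges H))"

definition comp_in :: "graph set \<Rightarrow> graph \<Rightarrow> nat set \<Rightarrow> bool" where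
  "comp_in \<C> G C \<longleftrightarrow> (\<exists>H\<in>\<C>. graph_iso (induced G C) H)"

definition add_edge :: "graph \<Rightarrow> nat \<Rightarrow> nat \<Rightarrow> graph" where
  "add_edge G u v = (verts G, insert {u, v} (edges G))"

definition bridge_addable :: "graph set \<Rightarrow> graph \<Rightarrow> bool" where
  "bridge_addable \<A> H \<longleftrightarrow> (\<forall>G\<in>\<A>. \<forall>C\<in>comps G. graph_iso (induced G C) H \<longrightarrow>
      (\<forall>u\<in>C. \<forall>v\<in>verts G - C. add_edge G u v \<in> \<A>))"

definition An :: "graph set \<Rightarrow> nat \<Rightarrow> graph set" where
  "An \<A> n = {G \<in> \<A>. verts G = {1..n}}"

text \<open>A tie-breaking rule choosing a largest component of every nonempty graph.\<close>
definition largest_selector :: "(graph \<Rightarrow> nat set) \<Rightarrow> bool" where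
  "largest_selector L \<longleftrightarrow> (\<forall>G. wf_graph G \<and> verts G \<noteq> {} \<longrightarrow>
      L G \<in> comps G \<and> (\<forall>C\<in>comps G. card C \<le> card (L G)))"

definition frag :: "(graph \<Rightarrow> nat set) \<Rightarrow> graph \<Rightarrow> graph set \<Rightarrow> nat" where
  "frag L G \<C> = card (\<Union>{C \<in> comps G - {L G}. comp_in \<C> G C})"

end

theory Submission
  imports Defs
begin

text \<open>Count pairs \<open>(G, (u, v))\<close> with \<open>G \<in> \<A>\<^sub>n\<close>, \<open>u\<close> in a component of \<open>G\<close> lying in \<open>\<C>\<close> and
  \<open>v\<close> outside it. By bridge-addability, adding the edge \<open>uv\<close> yields a graph of \<open>\<A>\<^sub>n\<close> in
  which \<open>uv\<close> is a bridge, and \<open>G\<close> is recovered by deleting it. A graph on \<open>n\<close> vertices has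
  at most \<open>n - 1\<close> bridges, so there are at most \<open>(n - 1) |\<A>\<^sub>n|\<close> such pairs (each taken
  in one orientation only). Every vertex counted by \<open>frag(G, \<C>)\<close> is separated from at least
  \<open>n\<close> minus the size of a largest component vertices, which yields at least
  \<open>n frag(G, \<C>) / 2\<close> pairs for \<open>G\<close>, whence (a). A component in \<open>\<C>\<close> of size \<open>k\<close> with
  \<open>a \<le> k \<le> n - a\<close> yields \<open>k (n - k) \<ge> a (n - a) > a (n - 1) / 2\<close> pairs, whence (b).\<close>

definition del_edge :: "graph \<Rightarrow> nat set \<Rightarrow> graph" where
  "del_edge G e = (verts G, edges G - {e})"

definition comp_of :: "graph \<Rightarrow> nat \<Rightarrow> nat set" where
  "comp_of G u = {v \<in> verts G. reach G u v}"

definition bridge :: "graph \<Rightarrow> nat set \<Rightarrow> bool" where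
  "bridge G e \<longleftrightarrow> e \<in> edges G \<and> (\<exists>u v. e = {u, v} \<and> \<not> reach (del_edge G e) u v)"

lemma verts_del_edge [simp]: "verts (del_edge G e) = verts G"
  and edges_del_edge [simp]: "edges (del_edge G e) = edges G - {e}"
  by (auto simp: del_edge_def verts_def edges_def)

lemma verts_add_edge [simp]: "verts (add_edge G u v) = verts G"
  and edges_add_edge [simp]: "edges (add_edge G u v) = insert {u, v} (edges G)"
  by (auto simp: add_edge_def verts_def edges_def)

lemma graph_eqI: "verts G = verts H \<Longrightarrow> edges G = edges H \<Longrightarrow> G = H"
  by (simp add: verts_def edges_def prod_eq_iff)

lemma wf_graph_edge_subset:
  assumes "wf_graph G" "e \<in> edges G" shows "e \<subseteq> verts G"
proof -
  obtain u v where "e = {u, v}" "u \<in> verts G" "v \<in> verts G"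
    using assms unfolding wf_graph_def by blast
  then show ?thesis by simp
qed

lemma wf_graph_finite_edges:
  assumes "wf_graph G" shows "finite (edges G)"
proof -
  have "edges G \<subseteq> Pow (verts G)" using wf_graph_edge_subset[OF assms] by blast
  then show ?thesis using assms(1) finite_subset unfolding wf_graph_def by blast
qed

lemma reach_refl [simp]: "reach G u u"
  by (simp add: reach_def)

lemma reach_edge: "{u, v} \<in> edges G \<Longrightarrow> reach G u v"
  by (auto simp: reach_def)

lemma reach_trans: "reach G u v \<Longrightarrow> reach G v w \<Longrightarrow> reach G u w"
  unfolding reach_def by (meson rtrancl_trans)

lemma reach_sym: "reach G u v \<Longrightarrow> reach G v u"
proof -
  have "sym {(x, y). {x, y} \<in> edges G}" by (auto simp: sym_def insert_commute)
  then have "sym ({(x, y). {x, y} \<in> edges G}\<^sup>*)" by (rule sym_rtrancl)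
  then show "reach G u v \<Longrightarrow> reach G v u" unfolding reach_def by (rule symD)
qed

lemma reach_mono: "edges G \<subseteq> edges H \<Longrightarrow> reach G u v \<Longrightarrow> reach H u v"
  unfolding reach_def by (erule rtrancl_mono[THEN subsetD, rotated]) auto

lemma reach_del_edge_cases:
  assumes "reach G a b"
  shows "reach (del_edge G {u, v}) a b
    \<or> reach (del_edge G {u, v}) a u \<and> reach (del_edge G {u, v}) v b
    \<or> reach (del_edge G {u, v}) a v \<and> reach (del_edge G {u, v}) u b"
  using assms unfolding reach_def[of G]
proof (induction rule: rtrancl_induct)
  case (step y z)
  show ?case
  proof (cases "{y, z} = {u, v}")
    case False
    then have "reach (del_edge G {u, v}) y z" using step by (intro reach_edge) auto
    then show ?thesis using step.IH reach_trans by blast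
  next
    case True
    then have "y = u \<and> z = v \<or> y = v \<and> z = u" by (auto simp: doubleton_eq_iff)
    then show ?thesis using step.IH by auto
  qed
qed simp

lemma comps_eq: "comps G = comp_of G ` verts G"
  by (simp add: comps_def comp_of_def)

lemma comp_of_eq: "reach G u v \<Longrightarrow> comp_of G u = comp_of G v"
  unfolding comp_of_def by (meson reach_sym reach_trans)

lemma comp_of_subset: "comp_of G u \<subseteq> verts G"
  by (auto simp: comp_of_def)

lemma self_in_comp_of: "u \<in> verts G \<Longrightarrow> u \<in> comp_of G u"
  by (auto simp: comp_of_def)

lemma finite_comp_of: "wf_graph G \<Longrightarrow> finite (comp_of G u)"
  unfolding wf_graph_def using finite_subset[OF comp_of_subset] by blast

lemma comps_subset: "C \<in> comps G \<Longrightarrow> C \<subseteq> verts G"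
  by (auto simp: comps_eq comp_of_def)

lemma comps_eq_comp_of:
  assumes "C \<in> comps G" "x \<in> C" shows "C = comp_of G x"
proof -
  obtain y where "C = comp_of G y" using assms(1) by (auto simp: comps_eq)
  moreover have "reach G y x" using assms(2) calculation by (simp add: comp_of_def)
  ultimately show ?thesis by (simp add: comp_of_eq)
qed

subsection \<open>Bridges\<close>

definition comp_root :: "graph \<Rightarrow> nat \<Rightarrow> nat" where
  "comp_root G w = Min (comp_of G w)"

text \<open>The endpoint of a bridge cut off by it from the least vertex of its component. Distinct
  bridges have distinct such endpoints, none of which is a least vertex, so a graph on
  \<open>{1..n}\<close> has at most \<open>n - 1\<close> bridges.\<close>
definition bridge_vertex :: "graph \<Rightarrow> nat set \<Rightarrow> nat" where
  "bridge_vertex G e = (SOME w. w \<in> e \<and> \<not> reach (del_edge G e) w (comp_root G w))"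

lemma comp_root_in_comp_of:
  assumes "wf_graph G" "w \<in> verts G" shows "comp_root G w \<in> comp_of G w"
  unfolding comp_root_def using finite_comp_of[OF assms(1)] self_in_comp_of[OF assms(2)]
  by (intro Min_in) auto

lemma bridgeE:
  assumes "bridge G e" "w \<in> e"
  obtains x where "e = {w, x}" "\<not> reach (del_edge G e) w x" "{w, x} \<in> edges G"
proof -
  obtain u v where e: "e = {u, v}" "\<not> reach (del_edge G e) u v" "e \<in> edges G"
    using assms(1) by (auto simp: bridge_def)
  then consider "w = u" | "w = v" using assms(2) by auto
  then show ?thesis
    using that e by cases (auto simp: insert_commute dest: reach_sym)
qed

lemma bridge_vertex:
  assumes wf: "wf_graph G" and br: "bridge G e"
  shows "bridge_vertex G e \<in> e" (is ?mem)
    and "\<not> reach (del_edge G e) (bridge_vertex G e) (comp_root G (bridge_vertex G e))" (is ?cut)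
proof -
  obtain u v where e: "e = {u, v}" "\<not> reach (del_edge G e) u v" "e \<in> edges G"
    using br by (auto simp: bridge_def)
  have "comp_of G u = comp_of G v" using e by (intro comp_of_eq reach_edge) simp
  then have "comp_root G u = comp_root G v" by (simp add: comp_root_def)
  then have "\<exists>w. w \<in> e \<and> \<not> reach (del_edge G e) w (comp_root G w)"
    using e by (metis insertCI reach_sym reach_trans)
  then have "?mem \<and> ?cut"
    unfolding bridge_vertex_def by (rule someI_ex)
  then show ?mem ?cut by blast+
qed

lemma bridge_vertex_inj:
  assumes wf: "wf_graph G" shows "inj_on (bridge_vertex G) {e. bridge G e}"
proof (rule inj_onI, rule ccontr)
  fix e1 e2 assume b1: "e1 \<in> {e. bridge G e}" and b2: "e2 \<in> {e. bridge G e}"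
    and eq: "bridge_vertex G e1 = bridge_vertex G e2" and ne: "e1 \<noteq> e2"
  define w where "w = bridge_vertex G e1"
  define r where "r = comp_root G w"
  have w1: "w \<in> e1" "\<not> reach (del_edge G e1) w r"
    using bridge_vertex[OF wf] b1 by (auto simp: w_def r_def)
  have w2: "w \<in> e2" "\<not> reach (del_edge G e2) w r"
    using bridge_vertex[OF wf] b2 eq by (auto simp: w_def r_def)
  obtain x1 where x1: "e1 = {w, x1}" "\<not> reach (del_edge G e1) w x1" "{w, x1} \<in> edges G"
    using bridgeE b1 w1(1) by blast
  obtain x2 where x2: "e2 = {w, x2}"
    using bridgeE b2 w2(1) by blast
  have "w \<in> verts G" using wf_graph_edge_subset[OF wf x1(3)] by simp
  then have "reach G w r" using comp_root_in_comp_of[OF wf] by (simp add: r_def comp_of_def)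
  then have "reach G x1 r" using x1(3) by (meson reach_edge reach_sym reach_trans)
  txt \<open>Removing \<open>e1\<close> cuts \<open>w\<close> from \<open>r\<close> but not \<open>x1\<close>; removing \<open>e2\<close> as well keeps
    \<open>x1\<close> connected to \<open>r\<close>, while \<open>e1\<close> joins \<open>w\<close> to \<open>x1\<close> in \<open>G - e2\<close>.\<close>
  then have "reach (del_edge G {w, x1}) x1 r"
    using reach_del_edge_cases[of G x1 r w x1] w1(2) x1(1) by blast
  then have x1_r: "reach (del_edge G e1) x1 r" using x1(1) by simp
  define G12 where "G12 = del_edge (del_edge G e1) e2"
  have sub: "edges G12 \<subseteq> edges (del_edge G e1)" by (auto simp: G12_def)
  have "\<not> reach G12 x1 w" "\<not> reach G12 w r"
    using reach_mono[OF sub] x1(2) w1(2) reach_sym by blast+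
  then have "reach G12 x1 r"
    using reach_del_edge_cases[OF x1_r, of w x2] x2 by (simp add: G12_def)
  then have "reach (del_edge G e2) x1 r" by (rule reach_mono[rotated]) (auto simp: G12_def)
  moreover have "reach (del_edge G e2) w x1" using x1 ne by (intro reach_edge) auto
  ultimately show False using w2 reach_trans by blast
qed

lemma bridge_vertex_range:
  assumes wf: "wf_graph G" and V: "verts G = {1..n}" and br: "bridge G e"
  shows "bridge_vertex G e \<in> {2..n}"
proof -
  note bv = bridge_vertex[OF wf br]
  have "e \<subseteq> verts G" using br wf_graph_edge_subset[OF wf] by (auto simp: bridge_def)
  then have in_V: "bridge_vertex G e \<in> {1..n}" using bv V by auto
  have "comp_root G 1 = 1" if "1 \<in> verts G"
    unfolding comp_root_def using that V comp_of_subset[of G 1]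
    by (intro Min_eqI) (auto intro: finite_comp_of wf self_in_comp_of)
  then have "bridge_vertex G e \<noteq> 1" using bv(2) in_V V by force
  then show ?thesis using in_V by auto
qed

lemma card_bridges_le:
  assumes "wf_graph G" "verts G = {1..n}"
  shows "card {e. bridge G e} \<le> n - 1"
proof -
  have "bridge_vertex G ` {e. bridge G e} \<subseteq> {2..n}"
    using bridge_vertex_range[OF assms] by blast
  from card_inj_on_le[OF bridge_vertex_inj[OF assms(1)] this] show ?thesis by simp
qed

lemma finite_bridges: "wf_graph G \<Longrightarrow> finite {e. bridge G e}"
  by (rule finite_subset[OF _ wf_graph_finite_edges]) (auto simp: bridge_def)

lemma card_bridge_pairs_le:
  assumes fin: "finite \<G>" and \<G>: "\<forall>G\<in>\<G>. wf_graph G \<and> verts G = {1..n}"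
  shows "card (Sigma \<G> (\<lambda>G. {e. bridge G e})) \<le> (n - 1) * card \<G>"
proof -
  have "card (Sigma \<G> (\<lambda>G. {e. bridge G e})) = (\<Sum>G\<in>\<G>. card {e. bridge G e})"
    using fin \<G> finite_bridges by simp
  also have "\<dots> \<le> (\<Sum>G\<in>\<G>. n - 1)" using \<G> card_bridges_le by (intro sum_mono) auto
  finally show ?thesis by (simp add: mult.commute)
qed

subsection \<open>Double counting through new bridges\<close>

lemma add_edge_across_components:
  assumes "C \<in> comps G" "u \<in> C" "v \<in> verts G - C"
  shows "del_edge (add_edge G u v) {u, v} = G" and "bridge (add_edge G u v) {u, v}"
proof -
  have not_reach: "\<not> reach G u v"
    using assms(3) comps_eq_comp_of[OF assms(1,2)] by (auto simp: comp_of_def)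
  then have "{u, v} \<notin> edges G" using reach_edge by blast
  then show del: "del_edge (add_edge G u v) {u, v} = G" by (intro graph_eqI) auto
  show "bridge (add_edge G u v) {u, v}" unfolding bridge_def using del not_reach by auto
qed

definition cross_pair :: "graph set \<Rightarrow> graph \<Rightarrow> nat \<Rightarrow> nat \<Rightarrow> bool" where
  "cross_pair \<C> G u v \<longleftrightarrow> (\<exists>C\<in>comps G. comp_in \<C> G C \<and> u \<in> C \<and> v \<in> verts G - C)"

lemma add_cross_pair_in_An:
  assumes "\<forall>H\<in>\<C>. bridge_addable \<A> H" "G \<in> An \<A> n" "cross_pair \<C> G u v"
  shows "add_edge G u v \<in> An \<A> n"
proof -
  obtain C H where "C \<in> comps G" "u \<in> C" "v \<in> verts G - C" "H \<in> \<C>" "graph_iso (induced G C) H"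
    using assms(3) by (auto simp: cross_pair_def comp_in_def)
  then show ?thesis using assms(1,2) by (auto simp: An_def bridge_addable_def)
qed

lemma finite_An:
  assumes "\<forall>G\<in>\<A>. wf_graph G" shows "finite (An \<A> n)"
proof (rule finite_subset)
  show "An \<A> n \<subseteq> {{1..n}} \<times> Pow (Pow {1..n})"
  proof
    fix G assume G: "G \<in> An \<A> n"
    then have "verts G = {1..n}" "wf_graph G" using assms by (auto simp: An_def)
    moreover from this(2) have "edges G \<subseteq> Pow (verts G)" using wf_graph_edge_subset by blast
    ultimately have "fst G = {1..n}" "snd G \<subseteq> Pow {1..n}" by (simp_all add: verts_def edges_def)
    then show "G \<in> {{1..n}} \<times> Pow (Pow {1..n})" by (cases G) auto
  qed
qed simp

lemma cross_pair_add_edge: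
  assumes "cross_pair \<C> G u v"
  shows "del_edge (add_edge G u v) {u, v} = G" and "bridge (add_edge G u v) {u, v}"
  using assms add_edge_across_components unfolding cross_pair_def by blast+

lemma inj_on_add_cross_edge:
  assumes D: "\<And>G u v. G \<in> \<G> \<Longrightarrow> (u, v) \<in> D G \<Longrightarrow> cross_pair \<C> G u v \<and> (v, u) \<notin> D G"
  shows "inj_on (\<lambda>(G, (u, v)). (add_edge G u v, {u, v})) (Sigma \<G> D)"
proof (rule inj_onI)
  fix p p' assume p: "p \<in> Sigma \<G> D" and p': "p' \<in> Sigma \<G> D"
    and eq: "(\<lambda>(G, (u, v)). (add_edge G u v, {u, v})) p = (\<lambda>(G, (u, v)). (add_edge G u v, {u, v})) p'"
  obtain G u v G' u' v' where pp: "p = (G, (u, v))" "p' = (G', (u', v'))"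
    by (metis prod.exhaust)
  have m: "G \<in> \<G>" "(u, v) \<in> D G" "G' \<in> \<G>" "(u', v') \<in> D G'" using p p' pp by auto
  have e: "add_edge G u v = add_edge G' u' v'" "{u, v} = {u', v'}" using eq pp by auto
  txt \<open>Deleting the new bridge recovers the graph; antisymmetry of \<open>D G\<close> fixes the orientation.\<close>
  have "G = G'"
    using cross_pair_add_edge(1)[of \<C> G u v] cross_pair_add_edge(1)[of \<C> G' u' v'] D m e by metis
  moreover have "u = u' \<and> v = v' \<or> u = v' \<and> v = u'" using e(2) by (auto simp: doubleton_eq_iff)
  ultimately show "p = p'" using pp m D[OF m(1,2)] by auto
qed

lemma sum_card_cross_pairs_le:
  assumes A_wf: "\<forall>G\<in>\<A>. wf_graph G" and C_ba: "\<forall>H\<in>\<C>. bridge_addable \<A> H"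
    and D: "\<And>G u v. G \<in> An \<A> n \<Longrightarrow> (u, v) \<in> D G \<Longrightarrow> cross_pair \<C> G u v \<and> (v, u) \<notin> D G"
  shows "(\<Sum>G\<in>An \<A> n. card (D G)) \<le> (n - 1) * card (An \<A> n)"
proof -
  let ?A = "An \<A> n" and ?S = "Sigma (An \<A> n) D"
  let ?h = "\<lambda>(G, (u, v)). (add_edge G u v, {u, v})"
  have A: "wf_graph G \<and> verts G = {1..n}" if "G \<in> ?A" for G
    using A_wf that by (auto simp: An_def)
  have image: "?h ` ?S \<subseteq> Sigma ?A (\<lambda>G. {e. bridge G e})"
  proof
    fix q assume "q \<in> ?h ` ?S"
    then obtain G u v where q: "q = (add_edge G u v, {u, v})" "G \<in> ?A" "(u, v) \<in> D G" by auto
    then show "q \<in> Sigma ?A (\<lambda>G. {e. bridge G e})"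
      using D[OF q(2,3)] by (simp add: cross_pair_add_edge(2)[of \<C>] add_cross_pair_in_An[OF C_ba])
  qed
  have finite_D: "finite (D G)" if GA: "G \<in> ?A" for G
  proof (rule finite_subset)
    show "D G \<subseteq> verts G \<times> verts G"
      using D[OF GA] comps_subset unfolding cross_pair_def by fast
    show "finite (verts G \<times> verts G)" using A[OF GA] by simp
  qed
  have "(\<Sum>G\<in>?A. card (D G)) = card (?h ` ?S)"
    using finite_An[OF A_wf] finite_D by (simp add: card_image[OF inj_on_add_cross_edge[OF D]])
  also have "\<dots> \<le> card (Sigma ?A (\<lambda>G. {e. bridge G e}))"
    using finite_An[OF A_wf] A finite_bridges by (intro card_mono[OF _ image]) blast
  also have "\<dots> \<le> (n - 1) * card ?A"
    using card_bridge_pairs_le[OF finite_An[OF A_wf]] A by blast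
  finally show ?thesis .
qed

subsection \<open>The expected fragment\<close>

definition frag_verts :: "(graph \<Rightarrow> nat set) \<Rightarrow> graph set \<Rightarrow> graph \<Rightarrow> nat set" where
  "frag_verts L \<C> G = \<Union>{C \<in> comps G - {L G}. comp_in \<C> G C}"

lemma frag_eq_card_frag_verts: "frag L G \<C> = card (frag_verts L \<C> G)"
  by (simp add: frag_def frag_verts_def)

text \<open>Pairs with both ends in \<open>Q\<close> are taken in increasing order only, so that the relation
  is antisymmetric.\<close>
definition separated_pairs :: "graph \<Rightarrow> nat set \<Rightarrow> (nat \<times> nat) set" where
  "separated_pairs G Q = {(u, v). u \<in> Q \<and> v \<in> verts G \<and> \<not> reach G u v \<and> (v \<notin> Q \<or> u < v)}"

lemma separated_pairs_antisym: "(u, v) \<in> separated_pairs G Q \<Longrightarrow> (v, u) \<notin> separated_pairs G Q"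
  by (auto simp: separated_pairs_def)

lemma card_separated_pairs_cover:
  assumes fin_V: "finite (verts G)" and Q: "Q \<subseteq> verts G"
    and closed: "\<And>u. u \<in> Q \<Longrightarrow> comp_of G u \<subseteq> Q"
  shows "card (Sigma Q (\<lambda>u. verts G - comp_of G u)) + card (Q \<times> (verts G - Q))
           \<le> 2 * card (separated_pairs G Q)"
proof -
  define D N Out where "D = separated_pairs G Q" and "N = Sigma Q (\<lambda>u. verts G - comp_of G u)"
    and "Out = Q \<times> (verts G - Q)"
  have "D \<subseteq> verts G \<times> verts G" using Q by (auto simp: D_def separated_pairs_def)
  then have fin_D: "finite D" by (rule finite_subset) (simp add: fin_V)
  have Out_sub: "Out \<subseteq> D"
    using closed by (fastforce simp: Out_def D_def separated_pairs_def comp_of_def)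
  txt \<open>A separated pair inside \<open>Q\<close> lies in \<open>D\<close> in one of its two orientations.\<close>
  have "N \<subseteq> D \<union> prod.swap ` (D - Out)"
  proof
    fix p assume "p \<in> N"
    then obtain u v where p: "p = (u, v)" "u \<in> Q" "v \<in> verts G" "\<not> reach G u v"
      by (auto simp: N_def comp_of_def)
    then have "u \<noteq> v" by auto
    then have "p \<in> D \<or> (v, u) \<in> D - Out"
      using p Q reach_sym[of G v u] by (auto simp: D_def Out_def separated_pairs_def)
    then show "p \<in> D \<union> prod.swap ` (D - Out)" using p by force
  qed
  then have "card N \<le> card (D \<union> prod.swap ` (D - Out))"
    using fin_D by (intro card_mono) auto
  also have "\<dots> \<le> card D + card (D - Out)"
    using card_Un_le card_image_le[of "D - Out" prod.swap] fin_D by (meson add_left_mono finite_Diff le_trans)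
  also have "\<dots> = card D + (card D - card Out)"
    using Out_sub fin_D by (simp add: card_Diff_subset finite_subset)
  finally show ?thesis
    using card_mono[OF fin_D Out_sub] unfolding D_def N_def Out_def by linarith
qed

lemma card_separated_pairs_ge:
  assumes wf: "wf_graph G" and Q: "Q \<subseteq> verts G"
    and closed: "\<And>u. u \<in> Q \<Longrightarrow> comp_of G u \<subseteq> Q \<and> card (comp_of G u) \<le> l"
    and size: "card Q + l \<le> card (verts G)"
  shows "card (verts G) * card Q \<le> 2 * card (separated_pairs G Q)"
proof -
  define n q where "n = card (verts G)" and "q = card Q"
  have fin_V: "finite (verts G)" using wf by (simp add: wf_graph_def)
  have fin_Q: "finite Q" using finite_subset[OF Q fin_V] .
  have "q * (n - l) = (\<Sum>u\<in>Q. n - l)" by (simp add: q_def)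
  also have "\<dots> \<le> (\<Sum>u\<in>Q. card (verts G - comp_of G u))"
    using closed
    by (intro sum_mono) (simp add: n_def card_Diff_subset comp_of_subset finite_comp_of[OF wf] diff_le_mono2)
  also have "\<dots> = card (Sigma Q (\<lambda>u. verts G - comp_of G u))" using fin_Q fin_V by simp
  finally have N: "q * (n - l) \<le> card (Sigma Q (\<lambda>u. verts G - comp_of G u))" .
  have Out: "card (Q \<times> (verts G - Q)) = q * (n - q)"
    using fin_Q fin_V Q by (simp add: n_def q_def card_cartesian_product card_Diff_subset)
  have cover: "card (Sigma Q (\<lambda>u. verts G - comp_of G u)) + card (Q \<times> (verts G - Q))
      \<le> 2 * card (separated_pairs G Q)"
    using closed by (intro card_separated_pairs_cover[OF fin_V Q]) blast
  have "q * l \<le> q * (n - q)" using size by (intro mult_le_mono2) (simp add: n_def q_def)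
  moreover have "q * (n - l) + q * l = n * q"
  proof -
    have "n - l + l = n" using size by (simp add: n_def)
    then show ?thesis by (metis add_mult_distrib2 mult.commute)
  qed
  ultimately show ?thesis using N Out cover unfolding n_def q_def by linarith
qed

lemma frag_verts_subset: "frag_verts L \<C> G \<subseteq> verts G"
  unfolding frag_verts_def using comps_subset[of _ G] by blast

lemma frag_verts_comp_of:
  assumes "u \<in> frag_verts L \<C> G"
  obtains "comp_of G u \<in> comps G" "comp_of G u \<noteq> L G" "comp_in \<C> G (comp_of G u)"
    "comp_of G u \<subseteq> frag_verts L \<C> G"
proof -
  obtain C where C: "C \<in> comps G" "C \<noteq> L G" "comp_in \<C> G C" "u \<in> C"
    using assms unfolding frag_verts_def by blast
  have "C = comp_of G u" using C(1,4) by (rule comps_eq_comp_of)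
  then show ?thesis using that C unfolding frag_verts_def by blast
qed

lemma frag_le_separated_pairs:
  assumes wf: "wf_graph G" and nonempty: "verts G \<noteq> {}" and L: "largest_selector L"
  shows "card (verts G) * frag L G \<C> \<le> 2 * card (separated_pairs G (frag_verts L \<C> G))"
proof -
  let ?Q = "frag_verts L \<C> G"
  have LG: "L G \<in> comps G" "\<And>C. C \<in> comps G \<Longrightarrow> card C \<le> card (L G)"
    using L wf nonempty unfolding largest_selector_def by blast+
  have fin_V: "finite (verts G)" using wf by (simp add: wf_graph_def)
  have Q: "?Q \<subseteq> verts G" by (rule frag_verts_subset)
  have closed: "comp_of G u \<subseteq> ?Q \<and> card (comp_of G u) \<le> card (L G)" if "u \<in> ?Q" for u
  proof -
    from that obtain "comp_of G u \<in> comps G" "comp_of G u \<subseteq> ?Q" by (rule frag_verts_comp_of)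
    then show ?thesis using LG(2) by blast
  qed
  have "?Q \<inter> L G = {}"
  proof (rule ccontr)
    assume "?Q \<inter> L G \<noteq> {}"
    then obtain u where u: "u \<in> ?Q" "u \<in> L G" by blast
    from u(1) obtain "comp_of G u \<noteq> L G" by (rule frag_verts_comp_of)
    then show False using comps_eq_comp_of[OF LG(1) u(2)] by simp
  qed
  then have "card ?Q + card (L G) = card (?Q \<union> L G)"
    using Q comps_subset[OF LG(1)] fin_V
    by (intro card_Un_disjoint[symmetric]) (auto intro: finite_subset)
  also have "\<dots> \<le> card (verts G)"
    using Q comps_subset[OF LG(1)] fin_V by (intro card_mono) auto
  finally have "card (verts G) * card ?Q \<le> 2 * card (separated_pairs G ?Q)"
    using closed by (intro card_separated_pairs_ge[OF wf Q])
  then show ?thesis by (simp add: frag_eq_card_frag_verts)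
qed

lemma separated_frag_pair_cross_pair:
  assumes "(u, v) \<in> separated_pairs G (frag_verts L \<C> G)"
  shows "cross_pair \<C> G u v"
proof -
  have u: "u \<in> frag_verts L \<C> G" and v: "v \<in> verts G" "\<not> reach G u v"
    using assms by (auto simp: separated_pairs_def)
  from u obtain "comp_of G u \<in> comps G" "comp_in \<C> G (comp_of G u)"
    by (rule frag_verts_comp_of)
  moreover have "u \<in> comp_of G u"
    using u frag_verts_subset by (blast intro: self_in_comp_of)
  moreover have "v \<in> verts G - comp_of G u" using v by (simp add: comp_of_def)
  ultimately show ?thesis unfolding cross_pair_def by blast
qed

theorem expected_frag_lt_2:
  assumes A_wf: "\<forall>G\<in>\<A>. wf_graph G" and C_ba: "\<forall>H\<in>\<C>. bridge_addable \<A> H"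
    and L: "largest_selector L" and nonempty: "An \<A> n \<noteq> {}"
  shows "(\<Sum>G\<in>An \<A> n. real (frag L G \<C>)) / real (card (An \<A> n)) < 2"
proof -
  let ?A = "An \<A> n"
  have card_pos: "card ?A > 0" using finite_An[OF A_wf] nonempty by (simp add: card_gt_0_iff)
  have A: "wf_graph G" "verts G = {1..n}" if "G \<in> ?A" for G
    using A_wf that by (auto simp: An_def)
  have "n * (\<Sum>G\<in>?A. frag L G \<C>) < 2 * n * card ?A" if "n \<ge> 1"
  proof -
    have "n * (\<Sum>G\<in>?A. frag L G \<C>) \<le> (\<Sum>G\<in>?A. 2 * card (separated_pairs G (frag_verts L \<C> G)))"
      unfolding sum_distrib_left using A frag_le_separated_pairs[OF _ _ L] that
      by (intro sum_mono) fastforce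
    also have "\<dots> = 2 * (\<Sum>G\<in>?A. card (separated_pairs G (frag_verts L \<C> G)))"
      by (simp add: sum_distrib_left)
    also have "\<dots> \<le> 2 * ((n - 1) * card ?A)"
      using sum_card_cross_pairs_le[OF A_wf C_ba, where D = "\<lambda>G. separated_pairs G (frag_verts L \<C> G)"]
        separated_frag_pair_cross_pair separated_pairs_antisym
      by (intro mult_le_mono2) blast
    also have "\<dots> < 2 * n * card ?A" using card_pos that by simp
    finally show ?thesis .
  qed
  moreover have "frag L G \<C> = 0" if "n = 0" "G \<in> ?A" for G
    using A(2)[OF that(2)] that(1) by (simp add: frag_def comps_def)
  ultimately have "(\<Sum>G\<in>?A. frag L G \<C>) < 2 * card ?A"
    using card_pos by (cases "n = 0") (auto simp: mult.assoc)
  then show ?thesis using card_pos by (simp add: divide_less_eq flip: of_nat_sum)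
qed

subsection \<open>Components of intermediate size\<close>

lemma cut_size_ge:
  fixes a k n :: nat
  assumes "a \<le> k" "k \<le> n - a"
  shows "a * (n - a) \<le> k * (n - k)"
proof -
  define d m where "d = k - a" and "m = n - k"
  have k: "k = a + d" and n: "n = k + m" and "a \<le> m"
    using assms by (auto simp: d_def m_def)
  have "a * (n - a) = a * m + a * d" using k n by (simp add: algebra_simps)
  also have "\<dots> \<le> a * m + d * m" using \<open>a \<le> m\<close> by (simp add: mult.commute)
  also have "\<dots> = k * (n - k)" using k n by (simp add: algebra_simps)
  finally show ?thesis .
qed

definition graphs_with_mid_component :: "graph set \<Rightarrow> nat \<Rightarrow> graph set \<Rightarrow> graph set" where
  "graphs_with_mid_component \<C> a \<G> = {G \<in> \<G>. \<exists>C\<in>comps G. comp_in \<C> G C \<and> a \<le> card C \<and>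
                                      card C \<le> card (verts G) - a}"

lemma card_graphs_with_mid_component_le:
  fixes a n :: nat
  assumes A_wf: "\<forall>G\<in>\<A>. wf_graph G" and C_ba: "\<forall>H\<in>\<C>. bridge_addable \<A> H"
  defines "B \<equiv> graphs_with_mid_component \<C> a (An \<A> n)"
  shows "card B * (a * (n - a)) \<le> (n - 1) * card (An \<A> n)"
proof -
  let ?A = "An \<A> n"
  have A: "wf_graph G" "verts G = {1..n}" if "G \<in> ?A" for G
    using A_wf that by (auto simp: An_def)
  have B_sub: "B \<subseteq> ?A" by (auto simp: B_def graphs_with_mid_component_def)
  have "\<forall>G\<in>B. \<exists>C. C \<in> comps G \<and> comp_in \<C> G C \<and> a \<le> card C \<and> card C \<le> n - a"
  proof
    fix G assume G: "G \<in> B"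
    then have "card (verts G) = n" using A(2)[of G] B_sub by auto
    then show "\<exists>C. C \<in> comps G \<and> comp_in \<C> G C \<and> a \<le> card C \<and> card C \<le> n - a"
      using G unfolding B_def graphs_with_mid_component_def by auto
  qed
  from bchoice[OF this] obtain K where K_all: "\<forall>G\<in>B.
      K G \<in> comps G \<and> comp_in \<C> G (K G) \<and> a \<le> card (K G) \<and> card (K G) \<le> n - a"
    by blast
  note K = K_all[rule_format]
  define D where "D G = (if G \<in> B then K G \<times> (verts G - K G) else {})" for G
  have "a * (n - a) \<le> card (D G)" if "G \<in> B" for G
  proof -
    have "K G \<subseteq> verts G" using K[OF that] comps_subset by blast
    moreover have "verts G = {1..n}" using A(2) B_sub that by blast
    ultimately have "card (D G) = card (K G) * (n - card (K G))"
      using that by (simp add: D_def card_cartesian_product card_Diff_subset finite_subset)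
    then show ?thesis using K[OF that] cut_size_ge by simp
  qed
  then have "card B * (a * (n - a)) \<le> (\<Sum>G\<in>B. card (D G))"
    using sum_mono[of B "\<lambda>_. a * (n - a)"] by (simp add: mult.commute)
  also have "\<dots> \<le> (\<Sum>G\<in>?A. card (D G))"
    using B_sub finite_An[OF A_wf] by (intro sum_mono2) auto
  also have "\<dots> \<le> (n - 1) * card ?A"
  proof (rule sum_card_cross_pairs_le[OF A_wf C_ba])
    fix G u v assume uv: "(u, v) \<in> D G"
    then have G: "G \<in> B" by (simp add: D_def split: if_splits)
    then have "u \<in> K G" "v \<in> verts G - K G" using uv by (simp_all add: D_def)
    then show "cross_pair \<C> G u v \<and> (v, u) \<notin> D G"
      using K[OF G] unfolding cross_pair_def D_def by auto
  qed
  finally show ?thesis .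
qed

theorem prob_mid_component_lt:
  assumes A_wf: "\<forall>G\<in>\<A>. wf_graph G" and C_ba: "\<forall>H\<in>\<C>. bridge_addable \<A> H"
    and a: "a \<ge> 1" and n: "n \<ge> 2 * a" and nonempty: "An \<A> n \<noteq> {}"
  shows "real (card (graphs_with_mid_component \<C> a (An \<A> n))) / real (card (An \<A> n)) < 2 / real a"
proof -
  let ?A = "An \<A> n" and ?B = "graphs_with_mid_component \<C> a (An \<A> n)"
  have card_pos: "card ?A > 0" using finite_An[OF A_wf] nonempty by (simp add: card_gt_0_iff)
  have key: "card ?B * a * (n - a) \<le> (n - 1) * card ?A"
    using card_graphs_with_mid_component_le[OF A_wf C_ba] by (simp add: mult.assoc)
  txt \<open>Since \<open>n \<ge> 2a\<close>, the factor \<open>n - a\<close> exceeds \<open>(n - 1) / 2\<close>.\<close>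
  have "card ?B * a < 2 * card ?A"
  proof (rule ccontr)
    assume "\<not> ?thesis"
    then have "2 * card ?A * (n - a) \<le> card ?B * a * (n - a)" by simp
    with key have "2 * (n - a) * card ?A \<le> (n - 1) * card ?A" by (simp add: algebra_simps)
    then have "2 * (n - a) \<le> n - 1" using card_pos by simp
    then show False using n a by linarith
  qed
  then have "real (card ?B) * real a < 2 * real (card ?A)" by (metis of_nat_less_iff of_nat_mult of_nat_numeral)
  then show ?thesis using card_pos a by (simp add: divide_less_eq less_divide_eq mult.commute)
qed

theorem lemma5p1:
  fixes \<A> \<C> :: "graph set"
  assumes A_wf: "\<forall>G\<in>\<A>. wf_graph G"
    and C_wf: "\<forall>H\<in>\<C>. wf_graph H \<and> connected_graph H"
    and C_ba: "\<forall>H\<in>\<C>. bridge_addable \<A> H"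
  shows
    "(\<forall>L n. largest_selector L \<and> An \<A> n \<noteq> {} \<longrightarrow>
        (\<Sum>G\<in>An \<A> n. real (frag L G \<C>)) / real (card (An \<A> n)) < 2)
     \<and>
     (\<forall>a n. a \<ge> 1 \<and> n \<ge> 2 * a \<and> An \<A> n \<noteq> {} \<longrightarrow>
        real (card {G \<in> An \<A> n. \<exists>C\<in>comps G. comp_in \<C> G C \<and> a \<le> card C \<and>
                                      card C \<le> card (verts G) - a})
          / real (card (An \<A> n)) < 2 / real a)"
  using expected_frag_lt_2[OF A_wf C_ba] prob_mid_component_lt[OF A_wf C_ba]
  unfolding graphs_with_mid_component_def by blast

end
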